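(* Let $\chi$ be a kernel as described in the context with $m_1(\chi,u)=0$ for all $u\in\mathbb{R}^+$. Let $f:\mathbb{R}^+\to\mathbb{R}$ be such that $\theta f$ and $\theta^2 f$ exist and are continuous on $\mathbb{R}^+$, and suppose there are constants $\alpha,\beta>0$ with $|f(x)|\le\alpha+\beta|\log x|$ for all $x\in\mathbb{R}^+$ (f need not be bounded). Then for every $w>0$ and $x\in\mathbb{R}^+$ the series defining $(I_w^{\chi}f)(x)$ converges absolutely, and for every $x\in\mathbb{R}^+$, $$\lim_{w\to+\infty} w\big[(I_w^{\chi}f)(x)-f(x)\big]=\frac{(\theta f)(x)}{2}.$$
   Context: A kernel is a continuous function $\chi:\mathbb{R}^+\to\mathbb{R}$ satisfying: (i) $\sum_{k=-\infty}^{+\infty}\chi(e^{-k}u)=1$ for every $u\in\mathbb{R}^+$; (ii) $M_2(\chi)<+\infty$ and $\lim_{\gamma\to+\infty}\sum_{|k-\log u|>\gamma}|\chi(e^{-k}u)|\,|k-\log u|^2=0$ uniformly with respect to $u\in\mathbb{R}^+$. Algebraic moments: $m_\nu(\chi,u)=\sum_{k\in\mathbb{Z}}\chi(e^{-k}u)(k-\log u)^\nu$; absolute moments: $M_\nu(\chi,u)=\sum_{k\in\mathbb{Z}}|\chi(e^{-k}u)|\,|k-\log u|^\nu$, $M_\nu(\chi)=\sup_{u>0}M_\nu(\chi,u)$. For $w>0$, $x\in\mathbb{R}^+$: $(I_w^{\chi}f)(x)=\sum_{k\in\mathbb{Z}}\chi(e^{-k}x^w)\,w\int_{k/w}^{(k+1)/w}f(e^u)\,du$.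 Mellin differential operator: $(\theta f)(x)=xf'(x)$, $\theta^2=\theta(\theta)$. *)

theory Defs
  imports "HOL-Analysis.Analysis"
begin

definition alg_moment :: "nat \<Rightarrow> (real \<Rightarrow> real) \<Rightarrow> real \<Rightarrow> real" where
  "alg_moment \<nu> chi u = (\<Sum>\<^sub>\<infinity>k::int. chi (exp (- real_of_int k) * u) * (real_of_int k - ln u) ^ \<nu>)"

definition abs_moment :: "nat \<Rightarrow> (real \<Rightarrow> real) \<Rightarrow> real \<Rightarrow> real" where
  "abs_moment \<nu> chi u = (\<Sum>\<^sub>\<infinity>k::int. \<bar>chi (exp (- real_of_int k) * u)\<bar> * \<bar>real_of_int k - ln u\<bar> ^ \<nu>)"

definition kernel :: "(real \<Rightarrow> real) \<Rightarrow> bool" where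
  "kernel chi \<longleftrightarrow>
     continuous_on {0<..} chi \<and>
     (\<forall>u>0. ((\<lambda>k::int. chi (exp (- real_of_int k) * u)) has_sum 1) UNIV) \<and>
     (\<forall>u>0. (\<lambda>k::int. \<bar>chi (exp (- real_of_int k) * u)\<bar> * \<bar>real_of_int k - ln u\<bar> ^ 2) summable_on UNIV) \<and>
     bdd_above {abs_moment 2 chi u | u. u > 0} \<and>
     (\<forall>\<epsilon>>0. \<exists>\<gamma>0. \<forall>\<gamma>>\<gamma>0. \<forall>u>0.
        (\<Sum>\<^sub>\<infinity>k\<in>{k::int. \<bar>real_of_int k - ln u\<bar> > \<gamma>}.
            \<bar>chi (exp (- real_of_int k) * u)\<bar> * \<bar>real_of_int k - ln u\<bar> ^ 2) < \<epsilon>)"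

definition kantorovich_term :: "(real \<Rightarrow> real) \<Rightarrow> real \<Rightarrow> (real \<Rightarrow> real) \<Rightarrow> real \<Rightarrow> int \<Rightarrow> real" where
  "kantorovich_term chi w f x k =
     chi (exp (- real_of_int k) * x powr w) * (w * integral {real_of_int k / w .. (real_of_int k + 1) / w} (\<lambda>u. f (exp u)))"

definition kantorovich_op :: "(real \<Rightarrow> real) \<Rightarrow> real \<Rightarrow> (real \<Rightarrow> real) \<Rightarrow> real \<Rightarrow> real" where
  "kantorovich_op chi w f x = (\<Sum>\<^sub>\<infinity>k::int. kantorovich_term chi w f x k)"

definition theta :: "(real \<Rightarrow> real) \<Rightarrow> real \<Rightarrow> real" where
  "theta f x = x * deriv f x"

end

(* In logarithmic coordinates g = f o exp has g' = (theta f) o exp and g'' = (theta^2 f) o exp,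
   and I_w averages g over the cells [k/w, (k+1)/w].  Since g'' is locally bounded and g grows
   at most linearly, g y = g L + g' L (y - L) + O((y - L)^2) globally, where L = log x.  The
   linear part averages exactly to g L + g' L (k - w L + 1/2) / w.  Summed against the kernel,
   the partition of unity returns f x, the vanishing first moment removes the terms in k - w L,
   and the 1/2 leaves (theta f) x / (2 w); the remainder is O(1/w^2) because the second absolute
   moments of the kernel are uniformly bounded. *)

theory Submission
  imports Defs
begin

lemma summable_on_dominated:
  fixes f g :: "'a \<Rightarrow> real"
  assumes g: "g summable_on A" and le: "\<And>k. k \<in> A \<Longrightarrow> \<bar>f k\<bar> \<le> g k"
  shows "f summable_on A" "\<bar>infsum f A\<bar> \<le> infsum g A"
proof -
  have n: "(\<lambda>k. norm (f k)) summable_on A"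
    by (rule summable_on_comparison_test[OF g]) (use le in auto)
  then show "f summable_on A"
    using summable_on_iff_abs_summable_on_real by blast
  have "\<bar>infsum f A\<bar> \<le> infsum (\<lambda>k. norm (f k)) A"
    using norm_infsum_bound[OF n] by simp
  also have "\<dots> \<le> infsum g A"
    by (rule infsum_mono[OF n g]) (use le in auto)
  finally show "\<bar>infsum f A\<bar> \<le> infsum g A" .
qed

lemma abs_le_one_plus_square: "\<bar>d\<bar> \<le> 1 + (d::real)^2"
proof -
  have "0 \<le> (\<bar>d\<bar> - 1)^2" by simp
  then show ?thesis by (simp add: power2_diff)
qed

lemma abs_plus_one_square_le: "(\<bar>d\<bar> + 1)^2 \<le> 2 * (1 + (d::real)^2)"
proof -
  have "0 \<le> (\<bar>d\<bar> - 1)^2" by simp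
  then show ?thesis by (simp add: power2_diff power2_sum)
qed

lemma int_near_real_cases:
  assumes "\<bar>real_of_int k - s\<bar> < 1"
  shows "k \<in> {\<lfloor>s\<rfloor>, \<lfloor>s\<rfloor> + 1}"
proof -
  have "k - 1 \<le> \<lfloor>s\<rfloor>" "\<lfloor>s\<rfloor> < k + 1"
    using assms unfolding le_floor_iff floor_less_iff by linarith+
  then show ?thesis by auto
qed

text \<open>Near \<open>k = ln u\<close> the kernel is evaluated in \<open>[e\<^sup>-\<^sup>1, e]\<close>, where it is bounded by
  continuity; away from it the weight \<open>1 + d\<^sup>2\<close> is at most \<open>2 d\<^sup>2\<close>.\<close>
lemma kernel_weight_dominated:
  fixes chi :: "real \<Rightarrow> real"
  assumes u: "u > 0" and B: "\<And>v. v \<in> {exp (-1)..exp 1} \<Longrightarrow> \<bar>chi v\<bar> \<le> B"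
  shows "\<bar>chi (exp (- real_of_int k) * u)\<bar> * (1 + (real_of_int k - ln u)^2)
    \<le> 2 * (\<bar>chi (exp (- real_of_int k) * u)\<bar> * \<bar>real_of_int k - ln u\<bar> ^ 2)
      + 2 * (if k \<in> {\<lfloor>ln u\<rfloor>, \<lfloor>ln u\<rfloor> + 1} then B else 0)"
proof -
  define c where "c = \<bar>chi (exp (- real_of_int k) * u)\<bar>"
  define d where "d = real_of_int k - ln u"
  have B0: "0 \<le> B" using B[of 1] by auto
  show ?thesis
  proof (cases "\<bar>d\<bar> < 1")
    case True
    have "exp (- real_of_int k) * u = exp (- d)"
      using u by (simp add: d_def exp_diff exp_minus field_simps)
    moreover have "exp (- d) \<in> {exp (-1)..exp 1}" using True by auto
    ultimately have "c \<le> B" using B by (auto simp: c_def)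
    moreover have "d^2 \<le> 1" using True by (simp add: abs_square_le_1)
    ultimately have "c * (1 + d^2) \<le> B * 2" by (intro mult_mono) (auto simp: c_def)
    moreover have "k \<in> {\<lfloor>ln u\<rfloor>, \<lfloor>ln u\<rfloor> + 1}"
      using int_near_real_cases[of k "ln u"] True by (simp add: d_def)
    moreover have "0 \<le> c * \<bar>d\<bar>^2" by (simp add: c_def)
    ultimately show ?thesis unfolding c_def[symmetric] d_def[symmetric] by simp
  next
    case False
    then have "1 \<le> \<bar>d\<bar>^2" by (intro one_le_power) simp
    then have "c * (1 + d^2) \<le> c * (2 * d^2)" by (intro mult_left_mono) (auto simp: c_def)
    then show ?thesis using B0 unfolding c_def[symmetric] d_def[symmetric] by simp
  qed
qed

lemma kernel_weighted_moment_bound: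
  assumes "kernel chi"
  obtains K where "\<And>u. u > 0 \<Longrightarrow>
      (\<lambda>k::int. \<bar>chi (exp (- real_of_int k) * u)\<bar> * (1 + (real_of_int k - ln u)^2)) summable_on UNIV"
    and "\<And>u. u > 0 \<Longrightarrow>
      (\<Sum>\<^sub>\<infinity>k::int. \<bar>chi (exp (- real_of_int k) * u)\<bar> * (1 + (real_of_int k - ln u)^2)) \<le> K"
proof -
  from assms have cont: "continuous_on {0<..} chi"
    and summ: "\<And>u. u > 0 \<Longrightarrow>
      (\<lambda>k::int. \<bar>chi (exp (- real_of_int k) * u)\<bar> * \<bar>real_of_int k - ln u\<bar> ^ 2) summable_on UNIV"
    and bdd: "bdd_above {abs_moment 2 chi u | u. u > 0}"
    unfolding kernel_def by auto
  obtain M where M: "\<And>u. u > 0 \<Longrightarrow> abs_moment 2 chi u \<le> M"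
    using bdd unfolding bdd_above_def by blast
  have "compact (chi ` {exp (-1)..exp 1})"
    by (rule compact_continuous_image, rule continuous_on_subset[OF cont])
       (auto intro: less_le_trans[OF exp_gt_zero])
  then obtain B where B: "\<And>v. v \<in> {exp (-1)..exp 1} \<Longrightarrow> \<bar>chi v\<bar> \<le> B"
    using compact_imp_bounded bounded_real by (metis image_eqI)
  show ?thesis
  proof (rule that)
    fix u :: real assume u: "u > 0"
    define m where "m = (\<lambda>k::int. \<bar>chi (exp (- real_of_int k) * u)\<bar> * \<bar>real_of_int k - ln u\<bar> ^ 2)"
    define n where "n k = (if k \<in> {\<lfloor>ln u\<rfloor>, \<lfloor>ln u\<rfloor> + 1} then B else 0)" for k :: int
    have ms: "m summable_on UNIV" using summ[OF u] by (simp add: m_def)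
    have ns: "(n has_sum (2 * B)) UNIV"
      by (rule has_sum_finite_neutralI[of "{\<lfloor>ln u\<rfloor>, \<lfloor>ln u\<rfloor> + 1}"]) (auto simp: n_def)
    then have ns': "n summable_on UNIV" by (auto simp: summable_on_def)
    have dom_s: "(\<lambda>k. 2 * m k + 2 * n k) summable_on UNIV"
      using ms ns' by (intro summable_on_add summable_on_cmult_right)
    have "infsum (\<lambda>k. 2 * m k + 2 * n k) UNIV = 2 * infsum m UNIV + 2 * infsum n UNIV"
      using ms ns' by (simp add: infsum_add summable_on_cmult_right infsum_cmult_right)
    also have "\<dots> \<le> 2 * M + 4 * B"
      using M[OF u] infsumI[OF ns] by (simp add: m_def abs_moment_def)
    finally have dom_le: "infsum (\<lambda>k. 2 * m k + 2 * n k) UNIV \<le> 2 * M + 4 * B" .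
    have dom: "\<bar>\<bar>chi (exp (- real_of_int k) * u)\<bar> * (1 + (real_of_int k - ln u)^2)\<bar> \<le> 2 * m k + 2 * n k"
      for k
      using kernel_weight_dominated[where chi = chi and k = k, OF u B] by (simp add: m_def n_def)
    show "(\<lambda>k::int. \<bar>chi (exp (- real_of_int k) * u)\<bar> * (1 + (real_of_int k - ln u)^2)) summable_on UNIV"
      using summable_on_dominated(1)[OF dom_s dom] .
    show "(\<Sum>\<^sub>\<infinity>k::int. \<bar>chi (exp (- real_of_int k) * u)\<bar> * (1 + (real_of_int k - ln u)^2)) \<le> 2 * M + 4 * B"
      using summable_on_dominated(2)[OF dom_s dom] dom_le by simp
  qed
qed

lemma has_real_derivative_comp_exp:
  assumes "h differentiable (at (exp y))"
  shows "((\<lambda>y. h (exp y)) has_real_derivative theta h (exp y)) (at y)"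
proof -
  have "(h has_real_derivative deriv h (exp y)) (at (exp y))"
    using assms by (simp add: DERIV_deriv_iff_real_differentiable)
  from DERIV_chain2[OF this DERIV_exp] show ?thesis
    by (simp add: theta_def mult.commute)
qed

lemma taylor_remainder_le_near:
  fixes g g' g'' :: "real \<Rightarrow> real"
  assumes dg: "\<And>z. (g has_real_derivative g' z) (at z)"
    and dg': "\<And>z. (g' has_real_derivative g'' z) (at z)"
    and B: "\<And>z. z \<in> {min L y..max L y} \<Longrightarrow> \<bar>g'' z\<bar> \<le> B"
  shows "\<bar>g y - g L - g' L * (y - L)\<bar> \<le> B * (y - L)^2"
proof -
  define S where "S = {min L y..max L y}"
  have B0: "0 \<le> B" using B[of L] by (auto simp: S_def)
  have slope: "\<bar>g' z - g' L\<bar> \<le> B * \<bar>y - L\<bar>" if z: "z \<in> S" for z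
  proof -
    have "norm (g' z - g' L) \<le> B * norm (z - L)"
      by (rule field_differentiable_bound[of S g' g'' B z L])
         (use z B in \<open>auto simp: S_def intro: has_field_derivative_at_within dg'\<close>)
    also have "\<dots> \<le> B * \<bar>y - L\<bar>" using z B0 by (intro mult_left_mono) (auto simp: S_def)
    finally show ?thesis by simp
  qed
  define r where "r z = g z - g L - g' L * (z - L)" for z
  have dr: "(r has_field_derivative (g' z - g' L)) (at z within S)" for z
    unfolding r_def by (rule has_field_derivative_at_within) (auto intro!: derivative_eq_intros dg)
  have "norm (r y - r L) \<le> B * \<bar>y - L\<bar> * norm (y - L)"
    by (rule field_differentiable_bound[of S r "\<lambda>z. g' z - g' L"]) (use dr slope in \<open>auto simp: S_def\<close>)
  then show ?thesis by (simp add: r_def power2_eq_square)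
qed

lemma taylor_remainder_le_far:
  fixes g :: "real \<Rightarrow> real"
  assumes a: "a \<ge> 0" and b: "b \<ge> 0" and growth: "\<bar>g y\<bar> \<le> a + b * \<bar>y\<bar>"
    and far: "1 \<le> \<bar>y - L\<bar>"
  shows "\<bar>g y - g L - D * (y - L)\<bar> \<le> (a + b * \<bar>L\<bar> + \<bar>g L\<bar> + b + \<bar>D\<bar>) * (y - L)^2"
proof -
  have lin_sq: "\<bar>y - L\<bar> \<le> (y - L)^2"
    using mult_right_mono[OF far abs_ge_zero[of "y - L"]] by (simp add: power2_eq_square abs_mult_self_eq)
  have one_sq: "1 \<le> (y - L)^2" using far lin_sq by linarith
  have "b * \<bar>y\<bar> \<le> b * \<bar>L\<bar> + b * \<bar>y - L\<bar>"
    using b by (simp flip: distrib_left add: mult_left_mono)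
  moreover have "\<bar>g y - g L - D * (y - L)\<bar> \<le> \<bar>g y\<bar> + \<bar>g L\<bar> + \<bar>D\<bar> * \<bar>y - L\<bar>"
    unfolding abs_mult[symmetric] by linarith
  ultimately have "\<bar>g y - g L - D * (y - L)\<bar> \<le> (a + b * \<bar>L\<bar> + \<bar>g L\<bar>) + (b + \<bar>D\<bar>) * \<bar>y - L\<bar>"
    using growth by (simp add: algebra_simps)
  also have "\<dots> \<le> (a + b * \<bar>L\<bar> + \<bar>g L\<bar>) * (y - L)^2 + (b + \<bar>D\<bar>) * (y - L)^2"
    using a b mult_left_mono[OF one_sq, of "a + b * \<bar>L\<bar> + \<bar>g L\<bar>"]
    by (intro add_mono mult_left_mono lin_sq) auto
  finally show ?thesis by (simp add: algebra_simps)
qed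

lemma taylor_remainder_quadratic_bound:
  fixes g g' g'' :: "real \<Rightarrow> real"
  assumes dg: "\<And>z. (g has_real_derivative g' z) (at z)"
    and dg': "\<And>z. (g' has_real_derivative g'' z) (at z)"
    and cont: "continuous_on UNIV g''"
    and "a \<ge> 0" "b \<ge> 0" "\<And>y. \<bar>g y\<bar> \<le> a + b * \<bar>y\<bar>"
  obtains C where "\<And>y. \<bar>g y - g L - g' L * (y - L)\<bar> \<le> C * (y - L)^2"
proof -
  have "compact (g'' ` {L - 1..L + 1})"
    by (rule compact_continuous_image, rule continuous_on_subset[OF cont]) auto
  then obtain B where B: "\<And>z. z \<in> {L - 1..L + 1} \<Longrightarrow> \<bar>g'' z\<bar> \<le> B"
    using compact_imp_bounded bounded_real by (metis image_eqI)
  define C where "C = max B (a + b * \<bar>L\<bar> + \<bar>g L\<bar> + b + \<bar>g' L\<bar>)"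
  show ?thesis
  proof (rule that)
    fix y
    show "\<bar>g y - g L - g' L * (y - L)\<bar> \<le> C * (y - L)^2"
    proof (cases "\<bar>y - L\<bar> \<le> 1")
      case True
      then have "\<bar>g y - g L - g' L * (y - L)\<bar> \<le> B * (y - L)^2"
        by (intro taylor_remainder_le_near[OF dg dg'] B) auto
      then show ?thesis by (smt (verit) C_def mult_right_mono zero_le_power2)
    next
      case False
      then have "\<bar>g y - g L - g' L * (y - L)\<bar> \<le> (a + b * \<bar>L\<bar> + \<bar>g L\<bar> + b + \<bar>g' L\<bar>) * (y - L)^2"
        by (intro taylor_remainder_le_far) (use assms in auto)
      then show ?thesis by (smt (verit) C_def mult_right_mono zero_le_power2)
    qed
  qed
qed

lemma cell_average_expansion:
  fixes g :: "real \<Rightarrow> real" and k :: real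
  assumes cont: "continuous_on UNIV g"
    and rem: "\<And>y. \<bar>g y - g L - D * (y - L)\<bar> \<le> C * (y - L)^2"
    and w: "w > 0"
  shows "\<bar>w * integral {k / w..(k + 1) / w} g - (g L + D * ((k - w * L + 1/2) / w))\<bar>
           \<le> 2 * C * (1 + (k - w * L)^2) / w^2"
proof -
  define a where "a = k / w"
  define b where "b = (k + 1) / w"
  define d where "d = k - w * L"
  define r where "r y = g y - (g L + D * (y - L))" for y
  have ab: "a \<le> b" and ba: "b - a = 1 / w" using w by (simp_all add: a_def b_def field_simps)
  have C0: "0 \<le> C" using rem[of "L + 1"] by simp
  have lin: "((\<lambda>y. g L + D * (y - L)) has_integral
      ((g L * b + D * (b - L)^2 / 2) - (g L * a + D * (a - L)^2 / 2))) {a..b}"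
    by (rule fundamental_theorem_of_calculus[OF ab])
       (auto intro!: derivative_eq_intros simp: has_real_derivative_iff_has_vector_derivative[symmetric])
  have lin_val: "w * ((g L * b + D * (b - L)^2 / 2) - (g L * a + D * (a - L)^2 / 2))
      = g L + D * ((k - w * L + 1/2) / w)"
    using w by (simp add: a_def b_def field_simps power2_eq_square)
  have ig: "g integrable_on {a..b}"
    by (rule integrable_continuous_interval[OF continuous_on_subset[OF cont]]) simp
  have "integral {a..b} r = integral {a..b} g - integral {a..b} (\<lambda>y. g L + D * (y - L))"
    unfolding r_def by (rule integral_diff[OF ig has_integral_integrable[OF lin]])
  then have "integral {a..b} g = integral {a..b} r + ((g L * b + D * (b - L)^2 / 2) - (g L * a + D * (a - L)^2 / 2))"
    using integral_unique[OF lin] by simp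
  then have split: "w * integral {a..b} g - (g L + D * ((k - w * L + 1/2) / w)) = w * integral {a..b} r"
    using lin_val by (simp add: distrib_left)
  have r_le: "norm (r y) \<le> C * ((\<bar>d\<bar> + 1) / w)^2" if y: "y \<in> {a..b}" for y
  proof -
    have "k \<le> w * y" "w * y \<le> k + 1"
      using y w by (auto simp: a_def b_def field_simps)
    then have "\<bar>w * y - w * L\<bar> \<le> \<bar>d\<bar> + 1" unfolding d_def by linarith
    moreover have "\<bar>w * y - w * L\<bar> = w * \<bar>y - L\<bar>"
      using w by (simp add: abs_mult flip: right_diff_distrib)
    ultimately have "w * \<bar>y - L\<bar> \<le> \<bar>d\<bar> + 1" by simp
    then have "\<bar>y - L\<bar> \<le> (\<bar>d\<bar> + 1) / w" using w by (simp add: field_simps)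
    then have "(y - L)^2 \<le> ((\<bar>d\<bar> + 1) / w)^2"
      by (metis abs_ge_zero power2_abs power_mono)
    then show ?thesis using rem[of y] mult_left_mono[OF _ C0] by (fastforce simp: r_def)
  qed
  have "norm (integral {a..b} r) \<le> C * ((\<bar>d\<bar> + 1) / w)^2 * (b - a)"
    by (rule integral_bound[OF ab _ r_le])
       (auto simp: r_def intro!: continuous_intros continuous_on_subset[OF cont])
  then have "\<bar>w * integral {a..b} r\<bar> \<le> C * (\<bar>d\<bar> + 1)^2 / w^2"
    using w by (simp add: ba abs_mult field_simps power2_eq_square)
  also have "\<dots> \<le> 2 * C * (1 + d^2) / w^2"
    using mult_left_mono[OF abs_plus_one_square_le[of d] C0]
    by (intro divide_right_mono) (simp_all add: algebra_simps)
  finally show ?thesis using split unfolding a_def b_def d_def by simp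
qed

lemma weighted_sum_expansion:
  fixes c a :: "int \<Rightarrow> real"
  assumes unity: "(c has_sum 1) UNIV"
    and moment: "(\<Sum>\<^sub>\<infinity>k. c k * (real_of_int k - t)) = 0"
    and weight_summable: "(\<lambda>k. \<bar>c k\<bar> * (1 + (real_of_int k - t)^2)) summable_on UNIV"
    and weight_le: "(\<Sum>\<^sub>\<infinity>k. \<bar>c k\<bar> * (1 + (real_of_int k - t)^2)) \<le> K"
    and approx: "\<And>k. \<bar>a k - (A + B * (real_of_int k - t))\<bar> \<le> \<epsilon> * (1 + (real_of_int k - t)^2)"
    and \<epsilon>: "\<epsilon> \<ge> 0"
  shows "\<exists>S. ((\<lambda>k. c k * a k) has_sum S) UNIV \<and> \<bar>S - A\<bar> \<le> \<epsilon> * K"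
proof -
  define W where "W k = \<bar>c k\<bar> * (1 + (real_of_int k - t)^2)" for k
  define e where "e k = a k - (A + B * (real_of_int k - t))" for k
  have "(\<lambda>k. c k * (real_of_int k - t)) summable_on UNIV"
    by (rule summable_on_dominated(1)[OF weight_summable])
       (simp add: abs_mult mult_left_mono abs_le_one_plus_square)
  then have moment_sum: "((\<lambda>k. c k * (real_of_int k - t)) has_sum 0) UNIV"
    using moment by (metis has_sum_infsum)
  have eW: "\<bar>c k * e k\<bar> \<le> \<epsilon> * W k" for k
    using mult_left_mono[OF approx[of k] abs_ge_zero[of "c k"]] by (simp add: e_def W_def abs_mult mult.left_commute)
  have \<epsilon>W: "(\<lambda>k. \<epsilon> * W k) summable_on UNIV"
    using weight_summable unfolding W_def by (rule summable_on_cmult_right)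
  define E where "E = (\<Sum>\<^sub>\<infinity>k. c k * e k)"
  have E_sum: "((\<lambda>k. c k * e k) has_sum E) UNIV"
    unfolding E_def by (rule has_sum_infsum[OF summable_on_dominated(1)[OF \<epsilon>W eW]])
  have "\<bar>E\<bar> \<le> (\<Sum>\<^sub>\<infinity>k. \<epsilon> * W k)"
    unfolding E_def by (rule summable_on_dominated(2)[OF \<epsilon>W eW])
  also have "\<dots> \<le> \<epsilon> * K"
    using weight_le \<epsilon> weight_summable by (simp add: infsum_cmult_right W_def mult_left_mono)
  finally have "\<bar>E\<bar> \<le> \<epsilon> * K" .
  moreover have "((\<lambda>k. A * c k + B * (c k * (real_of_int k - t)) + c k * e k) has_sum (A * 1 + B * 0 + E)) UNIV"
    by (intro has_sum_add has_sum_cmult_right unity moment_sum E_sum)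
  moreover have "c k * a k = A * c k + B * (c k * (real_of_int k - t)) + c k * e k" for k
    by (simp add: e_def algebra_simps)
  ultimately show ?thesis by auto
qed

lemma tendsto_scaled_error:
  fixes F :: "real \<Rightarrow> real"
  assumes "\<forall>\<^sub>F w in at_top. \<bar>F w - (a + b / w)\<bar> \<le> C / w^2"
  shows "((\<lambda>w. w * (F w - a)) \<longlongrightarrow> b) at_top"
proof -
  have "\<forall>\<^sub>F w in at_top. norm (w * (F w - a) - b) \<le> \<bar>C\<bar> / w"
    using assms eventually_gt_at_top[of 0]
  proof eventually_elim
    case (elim w)
    then have "\<bar>w * (F w - a) - b\<bar> = w * \<bar>F w - (a + b / w)\<bar>"
      by (simp add: abs_mult field_simps flip: abs_of_pos)
    also have "\<dots> \<le> w * (C / w^2)" using elim by (intro mult_left_mono) auto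
    also have "\<dots> \<le> \<bar>C\<bar> / w" using elim by (simp add: power2_eq_square divide_right_mono)
    finally show ?case by simp
  qed
  moreover have "((\<lambda>w. \<bar>C\<bar> / w) \<longlongrightarrow> 0) at_top"
    by (rule tendsto_divide_0[OF tendsto_const filterlim_at_top_imp_at_infinity[OF filterlim_ident]])
  ultimately have "((\<lambda>w. w * (F w - a) - b) \<longlongrightarrow> 0) at_top"
    by (rule Lim_null_comparison)
  then show ?thesis by (simp add: Lim_null[symmetric])
qed

lemma kantorovich_op_expansion:
  assumes "kernel chi" and moment: "\<forall>u>0. alg_moment 1 chi u = 0"
    and cont: "continuous_on UNIV (\<lambda>y. f (exp y))"
    and rem: "\<And>y. \<bar>f (exp y) - f x - D * (y - ln x)\<bar> \<le> C * (y - ln x)^2"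
    and x: "x > 0"
  obtains K where "\<And>w. w > 0 \<Longrightarrow> kantorovich_term chi w f x summable_on UNIV"
    and "\<And>w. w > 0 \<Longrightarrow> \<bar>kantorovich_op chi w f x - (f x + D / (2 * w))\<bar> \<le> K / w^2"
proof -
  obtain K where
    weight_summable: "\<And>u. u > 0 \<Longrightarrow>
      (\<lambda>k::int. \<bar>chi (exp (- real_of_int k) * u)\<bar> * (1 + (real_of_int k - ln u)^2)) summable_on UNIV"
    and weight_le: "\<And>u. u > 0 \<Longrightarrow>
      (\<Sum>\<^sub>\<infinity>k::int. \<bar>chi (exp (- real_of_int k) * u)\<bar> * (1 + (real_of_int k - ln u)^2)) \<le> K"
    using kernel_weighted_moment_bound[OF \<open>kernel chi\<close>] by blast
  have unity: "\<And>u. u > 0 \<Longrightarrow> ((\<lambda>k::int. chi (exp (- real_of_int k) * u)) has_sum 1) UNIV"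
    using \<open>kernel chi\<close> unfolding kernel_def by blast
  have C0: "0 \<le> C" using rem[of "ln x + 1"] by simp
  have expansion: "\<exists>S. (kantorovich_term chi w f x has_sum S) UNIV \<and>
      \<bar>S - (f x + D / (2 * w))\<bar> \<le> 2 * C / w^2 * K" if w: "w > 0" for w
  proof -
    define u where "u = x powr w"
    have u: "u > 0" and t: "ln u = w * ln x" using x by (simp_all add: u_def ln_powr)
    have cell: "\<bar>w * integral {k / w..(k + 1) / w} (\<lambda>y. f (exp y))
        - (f x + D / (2 * w) + D / w * (k - ln u))\<bar> \<le> 2 * C / w^2 * (1 + (k - ln u)^2)"
      for k :: real
    proof -
      have "f x + D * ((k - w * ln x + 1/2) / w) = f x + D / (2 * w) + D / w * (k - ln u)"
        using w by (simp add: t field_simps)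
      then show ?thesis
        using cell_average_expansion[OF cont _ w, of "ln x" D C k] rem x by (simp add: t)
    qed
    have first_moment: "(\<Sum>\<^sub>\<infinity>k::int. chi (exp (- real_of_int k) * u) * (real_of_int k - ln u)) = 0"
      using moment u by (simp add: alg_moment_def)
    obtain S where S: "((\<lambda>k. chi (exp (- real_of_int k) * u) *
        (w * integral {real_of_int k / w..(real_of_int k + 1) / w} (\<lambda>y. f (exp y)))) has_sum S) UNIV"
      and S_le: "\<bar>S - (f x + D / (2 * w))\<bar> \<le> 2 * C / w^2 * K"
      using weighted_sum_expansion[OF unity[OF u] first_moment weight_summable[OF u] weight_le[OF u] cell]
        C0 w by auto
    moreover have "kantorovich_term chi w f x = (\<lambda>k. chi (exp (- real_of_int k) * u) *
        (w * integral {real_of_int k / w..(real_of_int k + 1) / w} (\<lambda>y. f (exp y))))"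
      by (simp add: kantorovich_term_def u_def fun_eq_iff)
    ultimately show ?thesis by auto
  qed
  show ?thesis
  proof (rule that)
    fix w :: real assume w: "w > 0"
    from expansion[OF w] obtain S where S: "(kantorovich_term chi w f x has_sum S) UNIV"
      and S_le: "\<bar>S - (f x + D / (2 * w))\<bar> \<le> 2 * C / w^2 * K" by blast
    show "kantorovich_term chi w f x summable_on UNIV" using S by (auto simp: summable_on_def)
    show "\<bar>kantorovich_op chi w f x - (f x + D / (2 * w))\<bar> \<le> 2 * C * K / w^2"
      using S_le infsumI[OF S] by (simp add: kantorovich_op_def)
  qed
qed

theorem mainTheorem3:
  fixes chi f :: "real \<Rightarrow> real" and \<alpha> \<beta> :: real
  assumes "kernel chi"
    and "\<forall>u>0. alg_moment 1 chi u = 0"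
    and "\<forall>x>0. f differentiable (at x)"
    and "\<forall>x>0. theta f differentiable (at x)"
    and "continuous_on {0<..} (theta f)"
    and "continuous_on {0<..} (theta (theta f))"
    and "\<alpha> > 0" and "\<beta> > 0"
    and "\<forall>x>0. \<bar>f x\<bar> \<le> \<alpha> + \<beta> * \<bar>ln x\<bar>"
  shows "(\<forall>w>0. \<forall>x>0. (\<lambda>k::int. \<bar>kantorovich_term chi w f x k\<bar>) summable_on UNIV) \<and>
         (\<forall>x>0. ((\<lambda>w. w * (kantorovich_op chi w f x - f x)) \<longlongrightarrow> theta f x / 2) at_top)"
proof -
  have df: "((\<lambda>y. f (exp y)) has_real_derivative theta f (exp y)) (at y)" for y
    using assms(3) by (intro has_real_derivative_comp_exp) simp
  have dthf: "((\<lambda>y. theta f (exp y)) has_real_derivative theta (theta f) (exp y)) (at y)" for y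
    using assms(4) by (intro has_real_derivative_comp_exp) simp
  have cont: "continuous_on UNIV (\<lambda>y. f (exp y))"
    by (intro continuous_at_imp_continuous_on ballI DERIV_isCont[OF df])
  have cont2: "continuous_on UNIV (\<lambda>y. theta (theta f) (exp y))"
    by (rule continuous_on_compose2[OF assms(6) continuous_on_exp]) auto
  have growth: "\<bar>f (exp y)\<bar> \<le> \<alpha> + \<beta> * \<bar>y\<bar>" for y
    using assms(9)[rule_format, of "exp y"] by simp
  have expansion: "\<exists>K. \<forall>w>0. kantorovich_term chi w f x summable_on UNIV \<and>
      \<bar>kantorovich_op chi w f x - (f x + theta f x / (2 * w))\<bar> \<le> K / w^2" if x: "x > 0" for x
  proof -
    obtain C where "\<And>y. \<bar>f (exp y) - f x - theta f x * (y - ln x)\<bar> \<le> C * (y - ln x)^2"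
      using taylor_remainder_quadratic_bound[OF df dthf cont2 _ _ growth, of "ln x"] assms(7,8) x by auto
    from kantorovich_op_expansion[OF assms(1,2) cont this x] show ?thesis by metis
  qed
  show ?thesis
  proof (intro conjI allI impI)
    fix w x :: real assume "w > 0" "x > 0"
    then show "(\<lambda>k. \<bar>kantorovich_term chi w f x k\<bar>) summable_on UNIV"
      using expansion summable_on_iff_abs_summable_on_real by fastforce
  next
    fix x :: real assume "x > 0"
    then obtain K where "\<forall>w>0. \<bar>kantorovich_op chi w f x - (f x + theta f x / (2 * w))\<bar> \<le> K / w^2"
      using expansion by blast
    then show "((\<lambda>w. w * (kantorovich_op chi w f x - f x)) \<longlongrightarrow> theta f x / 2) at_top"
      by (intro tendsto_scaled_error[where C = K] eventually_mono[OF eventually_gt_at_top[of 0]]) simp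
  qed
qed

end
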